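(* Let $T$ be an $n$-vertex tree with matching number $\beta$, where $n\geqslant 2\beta$. (i) If $\beta=1$, then $\xi^{ee}(T)=\xi^{ee}(S_n)=\frac{3n-3}{2}$. (ii) If $\beta=2$, then $\xi^{ee}(T)\leqslant\frac{5n-4}{6}$, with equality if and only if $T\cong P_2(a,b)$ for some $a,b$ with $a+b+2=n$. (iii) If $\beta\geqslant 3$, then $\xi^{ee}(T)\leqslant\frac{10n-3\beta-7}{12}$, with equality if and only if $T\cong T_{n,\beta}$.
   Context: For a vertex $x$ of a connected graph $G$, $\varepsilon_G(x)$ is its eccentricity and $d_G(x)$ its degree; $\xi^{ee}(G)=\sum_{uv\in E(G)}\left(\frac{1}{\varepsilon_G(u)}+\frac{1}{\varepsilon_G(v)}\right)=\sum_{x}\frac{d_G(x)}{\varepsilon_G(x)}$. The matching number is the maximum number of pairwise disjoint edges. $S_n$ is the star on $n$ vertices. $P_t(a,b)$ is the graph on $t+a+b$ vertices obtained from the path $P_t$ on $t$ vertices by attaching $a$ pendant vertices to one endvertex and $b$ pendant vertices to the other endvertex. $T_{n,\beta}$ is the tree obtained from the star $S_{n-\beta+1}$ by attaching one pendant edge to each of $\beta-1$ of its non-central vertices. *)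

theory Defs
  imports Complex_Main "HOL-Library.Disjoint_Sets"
begin

type_synonym 'a graph = "'a set \<times> 'a set set"

definition verts :: "'a graph \<Rightarrow> 'a set" where "verts G = fst G"
definition edges :: "'a graph \<Rightarrow> 'a set set" where "edges G = snd G"

definition simple_graph :: "'a graph \<Rightarrow> bool" where
  "simple_graph G \<longleftrightarrow> finite (verts G) \<and>
     (\<forall>e\<in>edges G. \<exists>u v. e = {u, v} \<and> u \<noteq> v \<and> u \<in> verts G \<and> v \<in> verts G)"

definition adj :: "'a graph \<Rightarrow> 'a \<Rightarrow> 'a \<Rightarrow> bool" where
  "adj G u v \<longleftrightarrow> u \<noteq> v \<and> {u, v} \<in> edges G"

definition walk :: "'a graph \<Rightarrow> 'a list \<Rightarrow> bool" where
  "walk G xs \<longleftrightarrow> xs \<noteq> [] \<and> set xs \<subseteq> verts G \<and>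
     (\<forall>i. Suc i < length xs \<longrightarrow> adj G (xs ! i) (xs ! Suc i))"

definition connected_graph :: "'a graph \<Rightarrow> bool" where
  "connected_graph G \<longleftrightarrow> verts G \<noteq> {} \<and>
     (\<forall>u\<in>verts G. \<forall>v\<in>verts G. \<exists>xs. walk G xs \<and> hd xs = u \<and> last xs = v)"

definition is_cycle :: "'a graph \<Rightarrow> 'a list \<Rightarrow> bool" where
  "is_cycle G xs \<longleftrightarrow> walk G xs \<and> distinct xs \<and> length xs \<ge> 3 \<and> adj G (last xs) (hd xs)"

definition tree :: "'a graph \<Rightarrow> bool" where
  "tree G \<longleftrightarrow> simple_graph G \<and> connected_graph G \<and> \<not> (\<exists>xs. is_cycle G xs)"

definition dist :: "'a graph \<Rightarrow> 'a \<Rightarrow> 'a \<Rightarrow> nat" where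
  "dist G u v = (LEAST k. \<exists>xs. walk G xs \<and> hd xs = u \<and> last xs = v \<and> length xs = Suc k)"

definition ecc :: "'a graph \<Rightarrow> 'a \<Rightarrow> nat" where
  "ecc G x = Max (dist G x ` verts G)"

definition degree :: "'a graph \<Rightarrow> 'a \<Rightarrow> nat" where
  "degree G x = card {e \<in> edges G. x \<in> e}"

definition xi_ee :: "'a graph \<Rightarrow> real" where
  "xi_ee G = (\<Sum>e\<in>edges G. \<Sum>x\<in>e. 1 / real (ecc G x))"

definition is_matching :: "'a graph \<Rightarrow> 'a set set \<Rightarrow> bool" where
  "is_matching G M \<longleftrightarrow> M \<subseteq> edges G \<and> disjoint M"

definition matching_number :: "'a graph \<Rightarrow> nat" where
  "matching_number G = Max (card ` {M. is_matching G M})"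

definition graph_iso :: "'a graph \<Rightarrow> 'b graph \<Rightarrow> bool" where
  "graph_iso G H \<longleftrightarrow> (\<exists>f. bij_betw f (verts G) (verts H) \<and>
     (\<forall>u\<in>verts G. \<forall>v\<in>verts G. {u, v} \<in> edges G \<longleftrightarrow> {f u, f v} \<in> edges H))"

definition star_graph :: "nat \<Rightarrow> nat graph" where
  "star_graph n = ({0..<n}, {{0, i} | i. 1 \<le> i \<and> i < n})"

text \<open>P_t(a,b): path 0,1,...,t-1; a pendant vertices t..t+a-1 attached to 0;
  b pendant vertices t+a..t+a+b-1 attached to t-1.\<close>
definition P_graph :: "nat \<Rightarrow> nat \<Rightarrow> nat \<Rightarrow> nat graph" where
  "P_graph t a b = ({0..<t+a+b},
     {{i, i+1} | i. i + 1 < t} \<union> {{0, t+j} | j. j < a} \<union> {{t-1, t+a+j} | j. j < b})"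

text \<open>T_{n,beta}: star S_{n-beta+1} on 0..n-beta (centre 0), with a pendant edge
  {i, n-beta+i} attached to each of the non-central vertices i = 1..beta-1.\<close>
definition T_graph :: "nat \<Rightarrow> nat \<Rightarrow> nat graph" where
  "T_graph n \<beta> = ({0..<n},
     {{0, i} | i. 1 \<le> i \<and> i \<le> n - \<beta>} \<union> {{i, n - \<beta> + i} | i. 1 \<le> i \<and> i < \<beta>})"

end

theory Submission
  imports Defs
begin

text \<open>Let \<open>c\<close> be a vertex of minimum eccentricity. If \<open>\<epsilon>(c) \<ge> 3\<close>, every edge contributes at most
  \<open>2/3\<close>, so \<open>\<xi>\<^sup>e\<^sup>e(T) \<le> 2(n - 1)/3\<close>, strictly below both bounds, while a shortest path of length
  three from \<open>c\<close> gives two disjoint edges, so \<open>\<beta> \<ge> 2\<close>. Otherwise \<open>T\<close> is a rooted tree of height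
  at most two with root \<open>c\<close>, and the eccentricities are read off its shape: a star (\<open>\<beta> \<le> 1\<close>);
  all grandchildren below one child, which is \<open>P\<^sub>2(a, b)\<close> with \<open>\<xi>\<^sup>e\<^sup>e = (5n - 4)/6\<close> and \<open>\<beta> = 2\<close>;
  or grandchildren below two different children, where root, children and grandchildren have
  eccentricities 2, 3 and 4, so \<open>\<xi>\<^sup>e\<^sup>e = 5k/6 + 7m/12\<close> for \<open>k\<close> children and \<open>m\<close> grandchildren,
  which is below \<open>(5n - 4)/6\<close>. In this last case the root and the parents of the grandchildren
  cover all edges, so \<open>\<beta> \<le> m + 1\<close>, and this is exactly \<open>\<xi>\<^sup>e\<^sup>e \<le> (10n - 3\<beta> - 7)/12\<close>; equality
  forces \<open>\<beta> = m + 1\<close>, hence distinct parents, and then \<open>T \<cong> T\<^sub>n\<^sub>,\<^sub>\<beta>\<close>.\<close>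

section \<open>Walks and distances\<close>

lemma adj_commute: "adj G u v \<longleftrightarrow> adj G v u"
  unfolding adj_def by (auto simp: insert_commute)

lemma walk_singleton [simp]: "walk G [x] \<longleftrightarrow> x \<in> verts G"
  unfolding walk_def by auto

lemma walk_Cons_Cons [simp]:
  "walk G (x # y # xs) \<longleftrightarrow> x \<in> verts G \<and> adj G x y \<and> walk G (y # xs)"
  unfolding walk_def by (auto simp: nth_Cons' less_Suc_eq_0_disj split: if_splits)

lemma walk_append:
  "xs \<noteq> [] \<Longrightarrow> ys \<noteq> [] \<Longrightarrow>
   walk G (xs @ ys) \<longleftrightarrow> walk G xs \<and> walk G ys \<and> adj G (last xs) (hd ys)"
proof (induction xs rule: list_nonempty_induct)
  case (single x)
  then show ?case by (cases ys) auto
next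
  case (cons x xs)
  then show ?case by (cases xs) auto
qed

lemma walk_rev: "walk G xs \<Longrightarrow> walk G (rev xs)"
proof (induction xs)
  case (Cons x xs)
  show ?case
  proof (cases xs)
    case (Cons y ys)
    with Cons.prems Cons.IH have "walk G (rev xs)" "adj G (last (rev xs)) x" "x \<in> verts G"
      by (auto simp: adj_commute)
    then show ?thesis using walk_append[of "rev xs" "[x]" G] Cons by simp
  qed (use Cons.prems in simp)
qed (simp add: walk_def)

lemma walk_join:
  assumes "walk G xs" "walk G ys" "last xs = hd ys"
  shows "walk G (xs @ tl ys)" and "hd (xs @ tl ys) = hd xs" and "last (xs @ tl ys) = last ys"
proof -
  have "xs \<noteq> []" "ys \<noteq> []" using assms(1,2) by (auto simp: walk_def)
  then show "hd (xs @ tl ys) = hd xs" "last (xs @ tl ys) = last ys"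
    using assms(3) by (cases ys; auto)+
  show "walk G (xs @ tl ys)"
  proof (cases "tl ys")
    case Nil
    then show ?thesis using assms(1) by simp
  next
    case (Cons z zs)
    with assms(2,3) have "ys = last xs # z # zs" by (cases ys) auto
    with assms(1,2) show ?thesis
      by (subst walk_append) (auto simp: walk_def)
  qed
qed

lemma walk_drop: "walk G xs \<Longrightarrow> i < length xs \<Longrightarrow> walk G (drop i xs)"
  unfolding walk_def by (auto dest: in_set_dropD)

lemma walk_take: "walk G xs \<Longrightarrow> 0 < k \<Longrightarrow> walk G (take k xs)"
  unfolding walk_def by (auto dest: in_set_takeD)

definition reachable :: "'a graph \<Rightarrow> 'a \<Rightarrow> 'a \<Rightarrow> bool" where
  "reachable G u v \<longleftrightarrow> (\<exists>xs. walk G xs \<and> hd xs = u \<and> last xs = v)"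

lemma reachableI: "walk G xs \<Longrightarrow> hd xs = u \<Longrightarrow> last xs = v \<Longrightarrow> reachable G u v"
  unfolding reachable_def by blast

lemma reachable_sym: "reachable G u v \<Longrightarrow> reachable G v u"
  unfolding reachable_def using walk_rev by (metis hd_rev last_rev)

lemma reachable_trans: "reachable G u v \<Longrightarrow> reachable G v w \<Longrightarrow> reachable G u w"
  unfolding reachable_def using walk_join by metis

lemma walk_potential_bound:
  assumes h: "\<And>x y. adj G x y \<Longrightarrow> h y \<le> h x + (1::nat)"
  shows "walk G xs \<Longrightarrow> h (last xs) \<le> h (hd xs) + (length xs - 1)"
proof (induction xs rule: induct_list012)
  case (3 x y zs)
  then have "h y \<le> h x + 1" "h (last (y # zs)) \<le> h y + length zs" using h by auto
  then show ?case by simp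
qed (simp_all add: walk_def)

lemma dist_le_walk:
  assumes "walk G xs" "hd xs = u" "last xs = v"
  shows "dist G u v \<le> length xs - 1"
proof -
  have "length xs = Suc (length xs - 1)" using assms(1) by (cases xs) (auto simp: walk_def)
  then show ?thesis unfolding dist_def using assms by (intro Least_le) blast
qed

lemma shortest_walk:
  assumes "reachable G u v"
  obtains xs where "walk G xs" "hd xs = u" "last xs = v" "length xs = Suc (dist G u v)"
proof -
  from assms obtain xs where xs: "walk G xs" "hd xs = u" "last xs = v" unfolding reachable_def by blast
  then have "length xs = Suc (length xs - 1)" by (cases xs) (auto simp: walk_def)
  with xs have "\<exists>k xs. walk G xs \<and> hd xs = u \<and> last xs = v \<and> length xs = Suc k" by blast
  from LeastI_ex[OF this] show ?thesis using that unfolding dist_def by blast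
qed

lemma potential_le_dist:
  assumes "reachable G u v"
    and "\<And>x y. adj G x y \<Longrightarrow> h y \<le> h x + (1::nat)"
  shows "h v \<le> h u + dist G u v"
proof -
  obtain xs where "walk G xs" "hd xs = u" "last xs = v" "length xs = Suc (dist G u v)"
    using shortest_walk[OF assms(1)] .
  with walk_potential_bound[of G h xs] assms(2) show ?thesis by simp
qed

lemma dist_self: "u \<in> verts G \<Longrightarrow> dist G u u = 0"
  using dist_le_walk[of G "[u]" u u] by simp

lemma dist_eq_0D:
  assumes "reachable G u v" "dist G u v = 0"
  shows "u = v"
proof -
  obtain xs where "walk G xs" "hd xs = u" "last xs = v" "length xs = Suc (dist G u v)"
    using shortest_walk[OF assms(1)] .
  with assms(2) show ?thesis by (cases xs) auto
qed

lemma dist_eq_1D: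
  assumes "reachable G u v" "dist G u v = 1"
  shows "adj G u v"
proof -
  obtain xs where "walk G xs" "hd xs = u" "last xs = v" "length xs = Suc (dist G u v)"
    using shortest_walk[OF assms(1)] .
  with assms(2) show ?thesis by (cases xs; cases "tl xs") auto
qed

lemma dist_eq_2D:
  assumes "reachable G u v" "dist G u v = 2"
  obtains w where "adj G u w" "adj G w v"
proof -
  obtain xs where xs: "walk G xs" "hd xs = u" "last xs = v" "length xs = Suc (dist G u v)"
    using shortest_walk[OF assms(1)] .
  with assms(2) obtain x y z where "xs = [x, y, z]"
    by (cases xs; cases "tl xs"; cases "tl (tl xs)") auto
  with xs that show ?thesis by auto
qed

lemma dist_triangle:
  assumes "reachable G u v" and "reachable G v w"
  shows "dist G u w \<le> dist G u v + dist G v w"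
proof -
  obtain xs where xs: "walk G xs" "hd xs = u" "last xs = v" "length xs = Suc (dist G u v)"
    using shortest_walk[OF assms(1)] .
  obtain ys where ys: "walk G ys" "hd ys = v" "last ys = w" "length ys = Suc (dist G v w)"
    using shortest_walk[OF assms(2)] .
  have "dist G u w \<le> length (xs @ tl ys) - 1"
    using dist_le_walk walk_join[OF xs(1) ys(1)] xs(2,3) ys(2,3) by metis
  then show ?thesis using xs(4) ys(4) by simp
qed

lemma dist_shortest_walk_nth:
  assumes xs: "walk G xs" "hd xs = u" "length xs = Suc (dist G u (last xs))" and i: "i < length xs"
  shows "dist G u (xs ! i) = i"
proof -
  have "hd (take (Suc i) xs) = u" using xs(2) i by (cases xs) auto
  then have prefix: "walk G (take (Suc i) xs)" "hd (take (Suc i) xs) = u" "last (take (Suc i) xs) = xs ! i"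
    using walk_take[OF xs(1), of "Suc i"] i by (simp_all add: take_Suc_conv_app_nth)
  have suffix: "walk G (drop i xs)" "hd (drop i xs) = xs ! i" "last (drop i xs) = last xs"
    using walk_drop[OF xs(1) i] i by (auto simp: hd_drop_conv_nth)
  have "dist G u (xs ! i) \<le> i" using dist_le_walk[OF prefix] i by simp
  moreover have "dist G (xs ! i) (last xs) \<le> length xs - 1 - i" using dist_le_walk[OF suffix] by simp
  moreover have "dist G u (last xs) \<le> dist G u (xs ! i) + dist G (xs ! i) (last xs)"
    using prefix suffix by (intro dist_triangle reachableI)
  ultimately show ?thesis using xs(3) i by linarith
qed

lemma dist_le_ecc: "finite (verts G) \<Longrightarrow> y \<in> verts G \<Longrightarrow> dist G x y \<le> ecc G x"
  unfolding ecc_def by (rule Max_ge) auto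

lemma ecc_le:
  "finite (verts G) \<Longrightarrow> verts G \<noteq> {} \<Longrightarrow> (\<And>y. y \<in> verts G \<Longrightarrow> dist G x y \<le> k) \<Longrightarrow> ecc G x \<le> k"
  unfolding ecc_def by (subst Max_le_iff) auto

lemma ecc_attained:
  assumes "finite (verts G)" "verts G \<noteq> {}"
  obtains y where "y \<in> verts G" "dist G x y = ecc G x"
proof -
  have "Max (dist G x ` verts G) \<in> dist G x ` verts G" using assms by (intro Max_in) auto
  then show ?thesis using that unfolding ecc_def by auto
qed

lemma ecc_eqI:
  assumes "finite (verts G)" "\<And>y. y \<in> verts G \<Longrightarrow> dist G x y \<le> k" "y0 \<in> verts G" "k \<le> dist G x y0"
  shows "ecc G x = k"
  using ecc_le[of G x k] dist_le_ecc[of G y0 x] assms by fastforce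

lemma finite_edges: "simple_graph G \<Longrightarrow> finite (edges G)"
  unfolding simple_graph_def by (rule finite_subset[of _ "Pow (verts G)"]) auto

lemma simple_graph_edgeE:
  assumes "simple_graph G" "e \<in> edges G"
  obtains u v where "e = {u, v}" "u \<noteq> v" "u \<in> verts G" "v \<in> verts G"
  using assms unfolding simple_graph_def by blast

lemma adj_in_verts: "simple_graph G \<Longrightarrow> adj G u v \<Longrightarrow> u \<in> verts G \<and> v \<in> verts G"
  unfolding adj_def by (auto elim!: simple_graph_edgeE simp: doubleton_eq_iff)

lemma dist_le_1_if_adj: "simple_graph G \<Longrightarrow> adj G u v \<Longrightarrow> dist G u v \<le> 1"
  using dist_le_walk[of G "[u, v]" u v] adj_in_verts[of G u v] by simp

lemma finite_matchings: "simple_graph G \<Longrightarrow> finite {M. is_matching G M}"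
  by (rule finite_subset[of _ "Pow (edges G)"]) (auto simp: is_matching_def finite_edges)

lemma card_matching_le_matching_number:
  "simple_graph G \<Longrightarrow> is_matching G M \<Longrightarrow> card M \<le> matching_number G"
  unfolding matching_number_def by (rule Max_ge) (auto simp: finite_matchings)

text \<open>Distinct edges of a matching meet a vertex cover in distinct vertices.\<close>

lemma matching_number_le_cover:
  assumes s: "simple_graph G" and "finite S" and cover: "\<And>e. e \<in> edges G \<Longrightarrow> e \<inter> S \<noteq> {}"
  shows "matching_number G \<le> card S"
proof -
  have "card M \<le> card S" if M: "M \<subseteq> edges G" "disjoint M" for M
  proof -
    define g where "g e = (SOME s. s \<in> e \<inter> S)" for e :: "'a set"
    have g: "g e \<in> e \<inter> S" if "e \<in> M" for e
    proof -
      have "\<exists>s. s \<in> e \<inter> S" using cover M(1) that by blast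
      then show ?thesis unfolding g_def by (rule someI_ex)
    qed
    have "inj_on g M"
    proof (rule inj_onI)
      fix e1 e2 assume e: "e1 \<in> M" "e2 \<in> M" "g e1 = g e2"
      then have "e1 \<inter> e2 \<noteq> {}" using g[OF e(1)] g[OF e(2)] by auto
      then show "e1 = e2" using disjointD[OF M(2) e(1,2)] by blast
    qed
    moreover have "g ` M \<subseteq> S" using g by blast
    ultimately show ?thesis using card_inj_on_le \<open>finite S\<close> by blast
  qed
  moreover have "finite {M. is_matching G M}" using finite_matchings[OF s] .
  moreover have "is_matching G {}" unfolding is_matching_def by simp
  ultimately show ?thesis unfolding matching_number_def is_matching_def by (subst Max_le_iff) auto
qed

lemma two_le_matching_number:
  assumes "simple_graph G" "e1 \<in> edges G" "e2 \<in> edges G" "e1 \<inter> e2 = {}" "e1 \<noteq> {}"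
  shows "2 \<le> matching_number G"
proof -
  have "is_matching G {e1, e2}"
    using assms by (simp add: is_matching_def pairwise_insert disjnt_def Int_commute)
  moreover have "e1 \<noteq> e2" using assms(4,5) by blast
  then have "card {e1, e2} = 2" by simp
  ultimately show ?thesis using card_matching_le_matching_number[OF assms(1)] by metis
qed

lemma longest_pathE:
  assumes "finite (verts G)" "walk G ys" "distinct ys"
  obtains xs where "walk G xs" "distinct xs" "length ys \<le> length xs"
    "\<And>zs. walk G zs \<Longrightarrow> distinct zs \<Longrightarrow> length zs \<le> length xs"
proof -
  define is_path where "is_path n \<longleftrightarrow> (\<exists>zs. walk G zs \<and> distinct zs \<and> length zs = n)" for n
  have "\<forall>n. is_path n \<longrightarrow> n \<le> card (verts G)"
  proof (intro allI impI)
    fix n assume "is_path n"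
    then obtain zs where zs: "walk G zs" "distinct zs" "length zs = n" unfolding is_path_def by blast
    then have "card (set zs) \<le> card (verts G)" using assms(1) by (intro card_mono) (auto simp: walk_def)
    then show "n \<le> card (verts G)" using zs distinct_card by metis
  qed
  moreover have ys: "is_path (length ys)" unfolding is_path_def using assms(2,3) by blast
  ultimately obtain m where m: "is_path m" "\<And>n. is_path n \<Longrightarrow> n \<le> m"
    using Nat.ex_has_greatest_nat[of is_path "length ys" "card (verts G)"] by blast
  then obtain xs where "walk G xs" "distinct xs" "length xs = m" unfolding is_path_def by blast
  with m(2) ys show ?thesis using that unfolding is_path_def by blast
qed

text \<open>The last vertex of a longest path is a leaf: a further neighbour would either extend the
  path or close a cycle.\<close>

lemma acyclic_leafE:
  assumes s: "simple_graph G" and acyclic: "\<nexists>xs. is_cycle G xs" and "edges G \<noteq> {}"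
  obtains u v where "{u, v} \<in> edges G" "u \<noteq> v" "v \<in> verts G"
    "\<And>e. e \<in> edges G \<Longrightarrow> v \<in> e \<Longrightarrow> e = {u, v}"
proof -
  have finV: "finite (verts G)" using s unfolding simple_graph_def by simp
  obtain e where "e \<in> edges G" using \<open>edges G \<noteq> {}\<close> by blast
  then obtain a b where "e = {a, b}" "a \<noteq> b" "a \<in> verts G" "b \<in> verts G"
    using simple_graph_edgeE[OF s] by blast
  then have "walk G [a, b]" "distinct [a, b]" using \<open>e \<in> edges G\<close> by (auto simp: adj_def)
  then obtain xs where xs: "walk G xs" "distinct xs" "2 \<le> length xs"
    and longest: "\<And>zs. walk G zs \<Longrightarrow> distinct zs \<Longrightarrow> length zs \<le> length xs"
    using longest_pathE[OF finV] by (metis length_Cons list.size(3) numeral_2_eq_2)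
  define m where "m = length xs"
  have m2: "2 \<le> m" using xs(3) unfolding m_def .
  define v where "v = last xs"
  define u where "u = xs ! (m - 2)"
  have xs_ne: "xs \<noteq> []" and "Suc (m - 2) = length xs - 1" using m2 unfolding m_def by auto
  then have v_nth: "v = xs ! Suc (m - 2)" unfolding v_def by (simp add: last_conv_nth)
  have uv: "adj G u v" using xs m2 unfolding u_def v_nth walk_def m_def by simp
  show ?thesis
  proof (rule that)
    show "{u, v} \<in> edges G" "u \<noteq> v" using uv unfolding adj_def by auto
    show "v \<in> verts G" using adj_in_verts[OF s uv] by simp
  next
    fix e assume e: "e \<in> edges G" "v \<in> e"
    then obtain w where w: "e = {v, w}" "adj G v w"
      using simple_graph_edgeE[OF s e(1)] unfolding adj_def by (metis insert_commute insertE singletonD)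
    show "e = {u, v}"
    proof (rule ccontr)
      assume "e \<noteq> {u, v}"
      then have "w \<noteq> u" using w by (auto simp: insert_commute)
      show False
      proof (cases "w \<in> set xs")
        case False
        have "walk G (xs @ [w])"
          using xs xs_ne w adj_in_verts[OF s w(2)] unfolding v_def by (subst walk_append) auto
        then show False using longest[of "xs @ [w]"] xs False by simp
      next
        case True
        then obtain j where j: "j < m" "xs ! j = w" unfolding m_def by (auto simp: in_set_conv_nth)
        have "j \<noteq> Suc (m - 2)" using j w(2) v_nth unfolding adj_def by auto
        moreover have "j \<noteq> m - 2" using j \<open>w \<noteq> u\<close> u_def by auto
        ultimately have "3 \<le> length (drop j xs)" using j m2 unfolding m_def by auto
        then have "is_cycle G (drop j xs)"
          using xs j w(2) walk_drop[OF xs(1)] unfolding is_cycle_def v_def m_def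
          by (auto simp: hd_drop_conv_nth)
        then show False using acyclic by blast
      qed
    qed
  qed
qed

lemma is_cycle_mono:
  "verts G' \<subseteq> verts G \<Longrightarrow> edges G' \<subseteq> edges G \<Longrightarrow> is_cycle G' xs \<Longrightarrow> is_cycle G xs"
  unfolding is_cycle_def walk_def adj_def by blast

lemma acyclic_card_edges:
  assumes "simple_graph G" "\<nexists>xs. is_cycle G xs" "verts G \<noteq> {}"
  shows "card (edges G) + 1 \<le> card (verts G)"
  using assms
proof (induction "card (verts G)" arbitrary: G rule: less_induct)
  case less
  note s = less.prems(1) and acyclic = less.prems(2)
  have finV: "finite (verts G)" using s unfolding simple_graph_def by simp
  show ?case
  proof (cases "edges G = {}")
    case True
    then show ?thesis using finV less.prems(3) by (simp add: Suc_leI card_gt_0_iff)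
  next
    case False
    obtain u v where uv: "{u, v} \<in> edges G" "u \<noteq> v" "v \<in> verts G"
      and leaf: "\<And>e. e \<in> edges G \<Longrightarrow> v \<in> e \<Longrightarrow> e = {u, v}"
      using acyclic_leafE[OF s acyclic False] by blast
    define G' where "G' = (verts G - {v}, edges G - {{u, v}})"
    have V': "verts G' = verts G - {v}" and E': "edges G' = edges G - {{u, v}}"
      unfolding G'_def verts_def edges_def by auto
    have "u \<in> verts G" using simple_graph_edgeE[OF s uv(1)] by (metis doubleton_eq_iff)
    then have "verts G' \<noteq> {}" using V' uv by auto
    moreover have "simple_graph G'"
      unfolding simple_graph_def
    proof (intro conjI ballI)
      show "finite (verts G')" using finV V' by simp
    next
      fix e assume "e \<in> edges G'"
      then have e: "e \<in> edges G" "v \<notin> e" using E' leaf by auto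
      then show "\<exists>x y. e = {x, y} \<and> x \<noteq> y \<and> x \<in> verts G' \<and> y \<in> verts G'"
        using simple_graph_edgeE[OF s e(1)] V' by (metis Diff_iff insertCI singletonD)
    qed
    moreover have "\<nexists>xs. is_cycle G' xs" using acyclic is_cycle_mono[of G' G] V' E' by blast
    moreover have "card (verts G') < card (verts G)" unfolding V' using finV uv(3) by (rule card_Diff1_less)
    ultimately have "card (edges G') + 1 \<le> card (verts G')" using less.hyps by blast
    moreover have "card (edges G') = card (edges G) - 1" "card (edges G) > 0"
      using E' uv finite_edges[OF s] by (auto simp: card_gt_0_iff)
    ultimately show ?thesis using V' uv finV by simp
  qed
qed

lemma tree_simple: "tree G \<Longrightarrow> simple_graph G"
  unfolding tree_def by simp

lemma tree_reachable: "tree G \<Longrightarrow> u \<in> verts G \<Longrightarrow> v \<in> verts G \<Longrightarrow> reachable G u v"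
  unfolding tree_def connected_graph_def reachable_def by blast

lemma tree_no_cycle:
  "tree G \<Longrightarrow> walk G xs \<Longrightarrow> distinct xs \<Longrightarrow> 3 \<le> length xs \<Longrightarrow> adj G (last xs) (hd xs) \<Longrightarrow> False"
  unfolding tree_def is_cycle_def by blast

lemma tree_card_edges: "tree G \<Longrightarrow> card (edges G) + 1 \<le> card (verts G)"
  unfolding tree_def connected_graph_def using acyclic_card_edges by blast

lemma card_verts_tree_pos: "tree T \<Longrightarrow> 0 < card (verts T)"
  unfolding tree_def simple_graph_def connected_graph_def by (simp add: card_gt_0_iff)

section \<open>Invariance under isomorphism\<close>

lemma walk_map_iso:
  assumes f: "bij_betw f (verts G) (verts H)"
    and edge: "\<And>u v. u \<in> verts G \<Longrightarrow> v \<in> verts G \<Longrightarrow> {u, v} \<in> edges G \<longleftrightarrow> {f u, f v} \<in> edges H"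
    and "walk G xs"
  shows "walk H (map f xs)"
proof -
  have "adj H (f u) (f v)" if "adj G u v" "u \<in> verts G" "v \<in> verts G" for u v
    using that edge bij_betw_inv_into_left[OF f] unfolding adj_def by metis
  with assms(3) bij_betwE[OF f] show ?thesis unfolding walk_def by (auto simp: subset_iff)
qed

lemma dist_iso:
  assumes f: "bij_betw f (verts G) (verts H)"
    and edge: "\<And>u v. u \<in> verts G \<Longrightarrow> v \<in> verts G \<Longrightarrow> {u, v} \<in> edges G \<longleftrightarrow> {f u, f v} \<in> edges H"
    and uv: "u \<in> verts G" "v \<in> verts G"
  shows "dist H (f u) (f v) = dist G u v"
proof -
  define g where "g = inv_into (verts G) f"
  have g: "bij_betw g (verts H) (verts G)" unfolding g_def by (rule bij_betw_inv_into[OF f])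
  have gf: "g (f x) = x" if "x \<in> verts G" for x
    unfolding g_def using bij_betw_inv_into_left[OF f that] .
  have fg: "f (g a) = a" if "a \<in> verts H" for a
    unfolding g_def using bij_betw_inv_into_right[OF f that] .
  have edge_g: "{a, b} \<in> edges H \<longleftrightarrow> {g a, g b} \<in> edges G" if "a \<in> verts H" "b \<in> verts H" for a b
    using edge[of "g a" "g b"] bij_betwE[OF g] that fg by auto
  have "(\<exists>xs. walk G xs \<and> hd xs = u \<and> last xs = v \<and> length xs = Suc k) \<longleftrightarrow>
        (\<exists>ys. walk H ys \<and> hd ys = f u \<and> last ys = f v \<and> length ys = Suc k)" for k
  proof
    assume "\<exists>xs. walk G xs \<and> hd xs = u \<and> last xs = v \<and> length xs = Suc k"
    then obtain xs where xs: "walk G xs" "hd xs = u" "last xs = v" "length xs = Suc k" by blast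
    then have "xs \<noteq> []" by auto
    with xs show "\<exists>ys. walk H ys \<and> hd ys = f u \<and> last ys = f v \<and> length ys = Suc k"
      using walk_map_iso[OF f edge xs(1)] by (intro exI[of _ "map f xs"]) (simp add: hd_map last_map)
  next
    assume "\<exists>ys. walk H ys \<and> hd ys = f u \<and> last ys = f v \<and> length ys = Suc k"
    then obtain ys where ys: "walk H ys" "hd ys = f u" "last ys = f v" "length ys = Suc k" by blast
    then have "ys \<noteq> []" by auto
    with ys show "\<exists>xs. walk G xs \<and> hd xs = u \<and> last xs = v \<and> length xs = Suc k"
      using walk_map_iso[OF g edge_g ys(1)] gf uv by (intro exI[of _ "map g ys"]) (simp add: hd_map last_map)
  qed
  then show ?thesis unfolding dist_def by simp
qed

lemma edges_iso:
  assumes sG: "simple_graph G" and sH: "simple_graph H" and f: "bij_betw f (verts G) (verts H)"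
    and edge: "\<And>u v. u \<in> verts G \<Longrightarrow> v \<in> verts G \<Longrightarrow> {u, v} \<in> edges G \<longleftrightarrow> {f u, f v} \<in> edges H"
  shows "edges H = (\<lambda>e. f ` e) ` edges G"
proof (intro equalityI subsetI)
  fix e assume "e \<in> edges H"
  moreover obtain a b where ab: "e = {a, b}" "a \<in> verts H" "b \<in> verts H"
    using simple_graph_edgeE[OF sH \<open>e \<in> edges H\<close>] by blast
  moreover obtain x y where "x \<in> verts G" "y \<in> verts G" "a = f x" "b = f y"
    using ab bij_betw_imp_surj_on[OF f] by blast
  ultimately have "{x, y} \<in> edges G" "e = f ` {x, y}" using edge by auto
  then show "e \<in> (\<lambda>e. f ` e) ` edges G" by blast
next
  fix e assume "e \<in> (\<lambda>e. f ` e) ` edges G"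
  then obtain e' u v where "e' \<in> edges G" "e = f ` e'" "e' = {u, v}" "u \<in> verts G" "v \<in> verts G"
    by (metis imageE simple_graph_edgeE[OF sG])
  then show "e \<in> edges H" using edge by auto
qed

lemma graph_iso_xi_ee:
  assumes sG: "simple_graph G" and sH: "simple_graph H" and "graph_iso G H"
  shows "xi_ee H = xi_ee G"
proof -
  obtain f where f: "bij_betw f (verts G) (verts H)"
    and edge: "\<And>u v. u \<in> verts G \<Longrightarrow> v \<in> verts G \<Longrightarrow> {u, v} \<in> edges G \<longleftrightarrow> {f u, f v} \<in> edges H"
    using assms(3) unfolding graph_iso_def by blast
  have inj: "inj_on f (verts G)" and img: "f ` verts G = verts H"
    using f unfolding bij_betw_def by auto
  have ecc: "ecc H (f u) = ecc G u" if "u \<in> verts G" for u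
  proof -
    have "dist H (f u) ` verts H = dist G u ` verts G"
      unfolding img[symmetric] image_image using dist_iso[OF f edge that] by (auto intro: image_cong)
    then show ?thesis unfolding ecc_def by simp
  qed
  have edge_sub: "e \<subseteq> verts G" if "e \<in> edges G" for e
    using simple_graph_edgeE[OF sG that] by blast
  have "inj_on (\<lambda>e. f ` e) (edges G)"
    using inj_on_image_eq_iff[OF inj] edge_sub by (intro inj_onI) blast
  then have "xi_ee H = (\<Sum>e\<in>edges G. \<Sum>x\<in>f ` e. 1 / real (ecc H x))"
    using edges_iso[OF sG sH f edge] by (simp add: xi_ee_def sum.reindex)
  also have "\<dots> = (\<Sum>e\<in>edges G. \<Sum>x\<in>e. 1 / real (ecc G x))"
  proof (rule sum.cong[OF refl])
    fix e assume e: "e \<in> edges G"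
    then have "inj_on f e" using inj edge_sub inj_on_subset by blast
    then show "(\<Sum>x\<in>f ` e. 1 / real (ecc H x)) = (\<Sum>x\<in>e. 1 / real (ecc G x))"
      using ecc edge_sub[OF e] by (simp add: sum.reindex subset_iff)
  qed
  finally show ?thesis unfolding xi_ee_def .
qed

section \<open>Rooted trees of height at most two\<close>

text \<open>Root \<open>c\<close>, its children \<open>N1\<close> and its grandchildren \<open>N2\<close>, the parent of \<open>v \<in> N2\<close> being
  \<open>p v\<close>.\<close>

locale depth_two_tree =
  fixes G :: "'a graph" and c :: 'a and N1 N2 :: "'a set" and p :: "'a \<Rightarrow> 'a"
  assumes finite_verts: "finite (verts G)"
    and verts_eq: "verts G = insert c (N1 \<union> N2)"
    and root_notin: "c \<notin> N1" "c \<notin> N2"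
    and levels_disjoint: "N1 \<inter> N2 = {}"
    and parent_in: "\<And>v. v \<in> N2 \<Longrightarrow> p v \<in> N1"
    and edges_eq: "edges G = (\<lambda>x. {c, x}) ` N1 \<union> (\<lambda>v. {p v, v}) ` N2"
begin

lemma finite_N1: "finite N1" and finite_N2: "finite N2"
  using finite_verts verts_eq by simp_all

lemma card_verts: "card (verts G) = 1 + card N1 + card N2"
  using finite_N1 finite_N2 levels_disjoint root_notin by (simp add: verts_eq card_Un_disjoint)

lemma parent_neq: "v \<in> N2 \<Longrightarrow> p v \<noteq> v"
  using parent_in[of v] levels_disjoint by auto

lemma edge_iff:
  "{u, v} \<in> edges G \<longleftrightarrow> (u = c \<and> v \<in> N1) \<or> (v = c \<and> u \<in> N1) \<or> (v \<in> N2 \<and> u = p v) \<or> (u \<in> N2 \<and> v = p u)"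
  unfolding edges_eq by (auto simp: doubleton_eq_iff)

lemma adj_iff:
  "adj G u v \<longleftrightarrow> (u = c \<and> v \<in> N1) \<or> (v = c \<and> u \<in> N1) \<or> (v \<in> N2 \<and> u = p v) \<or> (u \<in> N2 \<and> v = p u)"
  unfolding adj_def edge_iff using root_notin parent_neq by (metis (full_types))

lemma edge_iff_adj: "{u, v} \<in> edges G \<longleftrightarrow> adj G u v"
  unfolding edge_iff adj_iff ..

lemma simple: "simple_graph G"
  unfolding simple_graph_def
proof (intro conjI ballI)
  fix e assume "e \<in> edges G"
  then consider x where "x \<in> N1" "e = {c, x}" | v where "v \<in> N2" "e = {p v, v}"
    unfolding edges_eq by blast
  then show "\<exists>u v. e = {u, v} \<and> u \<noteq> v \<and> u \<in> verts G \<and> v \<in> verts G"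
  proof cases
    case 1
    then show ?thesis using root_notin verts_eq by auto
  next
    case 2
    then show ?thesis using parent_neq[of v] parent_in[of v] verts_eq by auto
  qed
qed (rule finite_verts)

definition level :: "'a \<Rightarrow> nat" where
  "level u = (if u = c then 0 else if u \<in> N1 then 1 else 2)"

lemma walk_from_root:
  assumes "u \<in> verts G"
  obtains xs where "walk G xs" "hd xs = c" "last xs = u" "length xs = Suc (level u)"
proof -
  consider "u = c" | "u \<in> N1" | "u \<in> N2" using assms verts_eq by blast
  then show ?thesis
  proof cases
    case 1
    then show ?thesis using that[of "[c]"] verts_eq by (simp add: level_def)
  next
    case 2
    then have "level u = 1" using root_notin by (auto simp: level_def)
    then show ?thesis using that[of "[c, u]"] 2 verts_eq by (auto simp: adj_iff)
  next
    case 3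
    then have "level u = 2" using root_notin levels_disjoint by (auto simp: level_def)
    then show ?thesis using that[of "[c, p u, u]"] 3 verts_eq parent_in[OF 3] by (auto simp: adj_iff)
  qed
qed

lemma reachable_verts:
  assumes "u \<in> verts G" "v \<in> verts G"
  shows "reachable G u v"
proof -
  have "reachable G c u" "reachable G c v" using walk_from_root[OF assms(1)] walk_from_root[OF assms(2)] reachableI by metis+
  then show ?thesis using reachable_sym reachable_trans by metis
qed

lemma level_le_2: "level u \<le> 2"
  unfolding level_def by simp

lemma level_child: "x \<in> N1 \<Longrightarrow> level x = 1"
  unfolding level_def using root_notin by auto

lemma root_in_verts: "c \<in> verts G"
  using verts_eq by simp

lemma level_potential: "adj G a b \<Longrightarrow> level b \<le> level a + 1"
  unfolding level_def adj_iff using root_notin levels_disjoint parent_in by auto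

lemma dist_root:
  assumes "u \<in> verts G"
  shows "dist G c u = level u"
proof -
  have "level u \<le> level c + dist G c u"
    using assms level_potential by (intro potential_le_dist reachable_verts root_in_verts)
  moreover obtain xs where "walk G xs" "hd xs = c" "last xs = u" "length xs = Suc (level u)"
    using walk_from_root[OF assms] .
  then have "dist G c u \<le> level u" using dist_le_walk by fastforce
  ultimately show ?thesis by (simp add: level_def)
qed

lemma dist_le_level_sum:
  assumes "u \<in> verts G" "v \<in> verts G"
  shows "dist G u v \<le> level u + level v"
proof -
  obtain xs where xs: "walk G xs" "hd xs = c" "last xs = u" "length xs = Suc (level u)"
    using walk_from_root[OF assms(1)] .
  then have "xs \<noteq> []" by auto
  then have "dist G u c \<le> level u"
    using dist_le_walk[OF walk_rev[OF xs(1)]] xs by (simp add: hd_rev last_rev)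
  moreover have "dist G u v \<le> dist G u c + dist G c v"
    using assms by (intro dist_triangle reachable_verts root_in_verts)
  ultimately show ?thesis using dist_root[OF assms(2)] by linarith
qed

lemma dist_siblings: "v \<in> N2 \<Longrightarrow> w \<in> N2 \<Longrightarrow> p v = p w \<Longrightarrow> dist G v w \<le> 2"
  using dist_le_walk[of G "[v, p v, w]" v w] parent_in[of v] verts_eq by (auto simp: adj_iff)

text \<open>The left-hand sides are the distances in the tree; as they change by at most one along each
  edge, \<open>potential_le_dist\<close> makes them lower bounds.\<close>

lemma dist_from_child_ge:
  assumes "x \<in> N1" "u \<in> verts G"
  shows "(if u = x then 0 else if u = c \<or> u \<in> N2 \<and> p u = x then 1 else if u \<in> N1 then 2 else 3)
    \<le> dist G x u"
proof -
  define h where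
    "h u = (if u = x then 0 else if u = c \<or> u \<in> N2 \<and> p u = x then 1 else if u \<in> N1 then 2 else 3::nat)"
    for u
  have "h b \<le> h a + 1" if "adj G a b" for a b
    using that assms(1) root_notin levels_disjoint parent_in unfolding h_def adj_iff by auto
  then have "h u \<le> h x + dist G x u"
    using assms verts_eq by (intro potential_le_dist reachable_verts) auto
  then show ?thesis unfolding h_def by simp
qed

lemma dist_from_grandchild_ge:
  assumes "v \<in> N2" "u \<in> verts G"
  shows "(if u = v then 0 else if u = p v then 1 else if u = c \<or> u \<in> N2 \<and> p u = p v then 2
      else if u \<in> N1 then 3 else 4) \<le> dist G v u"
proof -
  define h where
    "h u = (if u = v then 0 else if u = p v then 1 else if u = c \<or> u \<in> N2 \<and> p u = p v then 2
      else if u \<in> N1 then 3 else 4::nat)" for u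
  have "h b \<le> h a + 1" if "adj G a b" for a b
    using that assms(1) root_notin levels_disjoint parent_in unfolding h_def adj_iff by auto
  then have "h u \<le> h v + dist G v u"
    using assms verts_eq by (intro potential_le_dist reachable_verts) auto
  then show ?thesis unfolding h_def by simp
qed

lemma ecc_root:
  assumes "N1 \<noteq> {}"
  shows "ecc G c = (if N2 = {} then 1 else 2)"
proof -
  define k where "k = (if N2 = {} then 1 else 2::nat)"
  have "level u \<le> k" if "u \<in> verts G" for u
    using that verts_eq unfolding level_def k_def by auto
  moreover obtain w where "w \<in> verts G" "level w = k"
  proof (cases "N2 = {}")
    case True
    then obtain x where "x \<in> N1" using assms by blast
    then show ?thesis using that[of x] level_child True verts_eq unfolding k_def by auto
  next
    case False
    then obtain v where v: "v \<in> N2" by blast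
    then have "level v = 2" using root_notin levels_disjoint unfolding level_def by auto
    then show ?thesis using that[of v] v False verts_eq unfolding k_def by auto
  qed
  ultimately have "ecc G c = k" using dist_root by (intro ecc_eqI[OF finite_verts]) auto
  then show ?thesis unfolding k_def .
qed

lemma ecc_child_eq_3:
  assumes x: "x \<in> N1" and v: "v \<in> N2" "p v \<noteq> x"
  shows "ecc G x = 3"
proof (rule ecc_eqI[OF finite_verts])
  fix u assume "u \<in> verts G"
  then show "dist G x u \<le> 3"
    using dist_le_level_sum[of x u] level_le_2[of u] level_child[OF x] x verts_eq by simp
next
  have "v \<noteq> x" "v \<noteq> c" "v \<notin> N1" using v x root_notin levels_disjoint by auto
  then show "v \<in> verts G" "3 \<le> dist G x v"
    using v dist_from_child_ge[OF x, of v] verts_eq by auto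
qed

lemma ecc_grandchild_eq_4:
  assumes v: "v \<in> N2" and w: "w \<in> N2" "p w \<noteq> p v"
  shows "ecc G v = 4"
proof (rule ecc_eqI[OF finite_verts])
  fix u assume "u \<in> verts G"
  then show "dist G v u \<le> 4"
    using dist_le_level_sum[of v u] level_le_2[of u] level_le_2[of v] v verts_eq by simp
next
  have "w \<noteq> v" "w \<noteq> p v" "w \<noteq> c" "w \<notin> N1"
    using parent_in[OF v] v w root_notin levels_disjoint by auto
  then show "w \<in> verts G" "4 \<le> dist G v w"
    using w dist_from_grandchild_ge[OF v, of w] verts_eq by auto
qed

lemma ecc_sole_parent_eq_2:
  assumes x: "x \<in> N1" and sole: "\<forall>v\<in>N2. p v = x" and y: "y \<in> N1" "y \<noteq> x"
  shows "ecc G x = 2"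
proof (rule ecc_eqI[OF finite_verts])
  fix u assume "u \<in> verts G"
  then consider "u \<in> insert c N1" | "u \<in> N2" using verts_eq by auto
  then show "dist G x u \<le> 2"
  proof cases
    case 1
    then show ?thesis
      using dist_le_level_sum[of x u] x root_notin verts_eq unfolding level_def by (auto split: if_splits)
  next
    case 2
    then have "adj G x u" using sole unfolding adj_iff by auto
    then show ?thesis using dist_le_1_if_adj[OF simple] by fastforce
  qed
next
  have "y \<noteq> c" "y \<notin> N2" using y root_notin levels_disjoint by auto
  then show "y \<in> verts G" "2 \<le> dist G x y"
    using y dist_from_child_ge[OF x, of y] verts_eq by auto
qed

lemma ecc_sole_child_eq_1:
  assumes N1: "N1 = {x}" and sole: "\<forall>v\<in>N2. p v = x"
  shows "ecc G x = 1"
proof (rule ecc_eqI[OF finite_verts])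
  fix u assume "u \<in> verts G"
  then consider "u = x" | "adj G x u" using verts_eq sole N1 unfolding adj_iff by auto
  then show "dist G x u \<le> 1"
    using dist_self[of x G] dist_le_1_if_adj[OF simple] N1 verts_eq by cases auto
next
  show "c \<in> verts G" "1 \<le> dist G x c"
    using N1 dist_from_child_ge[of x c] root_notin verts_eq by auto
qed

lemma ecc_grandchild_eq_3:
  assumes sole: "\<forall>v\<in>N2. p v = x" and y: "y \<in> N1" "y \<noteq> x" and v: "v \<in> N2"
  shows "ecc G v = 3"
proof (rule ecc_eqI[OF finite_verts])
  fix u assume "u \<in> verts G"
  then consider "u \<in> insert c N1" | "u \<in> N2" using verts_eq by auto
  then show "dist G v u \<le> 3"
  proof cases
    case 1
    then show ?thesis
      using dist_le_level_sum[of v u] v root_notin verts_eq unfolding level_def by (auto split: if_splits)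
  next
    case 2
    then show ?thesis using dist_siblings[OF v, of u] sole v by auto
  qed
next
  have "y \<noteq> v" "y \<noteq> p v" "y \<noteq> c" "y \<notin> N2"
    using v y sole root_notin levels_disjoint by auto
  then show "y \<in> verts G" "3 \<le> dist G v y"
    using y dist_from_grandchild_ge[OF v, of y] verts_eq by auto
qed

lemma xi_ee_eq:
  "xi_ee G = (\<Sum>x\<in>N1. 1 / real (ecc G c) + 1 / real (ecc G x))
    + (\<Sum>v\<in>N2. 1 / real (ecc G (p v)) + 1 / real (ecc G v))"
proof -
  let ?f = "\<lambda>e. \<Sum>x\<in>e. 1 / real (ecc G x)"
  have disjoint: "(\<lambda>x. {c, x}) ` N1 \<inter> (\<lambda>v. {p v, v}) ` N2 = {}"
    using root_notin levels_disjoint by (auto simp: doubleton_eq_iff)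
  have inj1: "inj_on (\<lambda>x. {c, x}) N1"
    using root_notin by (auto intro!: inj_onI simp: doubleton_eq_iff)
  have inj2: "inj_on (\<lambda>v. {p v, v}) N2"
  proof (rule inj_onI)
    fix v w assume "v \<in> N2" "w \<in> N2" "{p v, v} = {p w, w}"
    then show "v = w" using parent_in[of v] parent_in[of w] levels_disjoint by (auto simp: doubleton_eq_iff)
  qed
  have "xi_ee G = (\<Sum>e\<in>(\<lambda>x. {c, x}) ` N1. ?f e) + (\<Sum>e\<in>(\<lambda>v. {p v, v}) ` N2. ?f e)"
    unfolding xi_ee_def edges_eq using finite_N1 finite_N2 disjoint by (intro sum.union_disjoint) auto
  also have "\<dots> = (\<Sum>x\<in>N1. ?f {c, x}) + (\<Sum>v\<in>N2. ?f {p v, v})"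
    by (simp add: sum.reindex[OF inj1] sum.reindex[OF inj2])
  also have "\<dots> = (\<Sum>x\<in>N1. 1 / real (ecc G c) + 1 / real (ecc G x))
      + (\<Sum>v\<in>N2. 1 / real (ecc G (p v)) + 1 / real (ecc G v))"
  proof (intro arg_cong2[where f = "(+)"] sum.cong refl)
    show "?f {c, x} = 1 / real (ecc G c) + 1 / real (ecc G x)" if "x \<in> N1" for x
      using that root_notin by (subst sum.insert) auto
    show "?f {p v, v} = 1 / real (ecc G (p v)) + 1 / real (ecc G v)" if "v \<in> N2" for v
      using parent_neq[OF that] by (subst sum.insert) auto
  qed
  finally show ?thesis .
qed

lemma xi_ee_no_grandchildren:
  assumes N2: "N2 = {}" and "N1 \<noteq> {}"
  shows "xi_ee G = real (card N1) * (1 + 1 / (if 2 \<le> card N1 then 2 else 1))"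
proof -
  have "ecc G x = (if 2 \<le> card N1 then 2 else 1)" if x: "x \<in> N1" for x
  proof (cases "2 \<le> card N1")
    case True
    then have "\<not> (\<forall>a\<in>N1. \<forall>b\<in>N1. a = b)" using card_le_Suc0_iff_eq[OF finite_N1] by simp
    then obtain y where "y \<in> N1" "y \<noteq> x" using x by blast
    then show ?thesis using ecc_sole_parent_eq_2[OF x] N2 True by simp
  next
    case False
    then have "N1 = {x}" using card_le_Suc0_iff_eq[OF finite_N1] x by auto
    then show ?thesis using ecc_sole_child_eq_1 N2 False by simp
  qed
  then show ?thesis using xi_ee_eq ecc_root[OF assms(2)] N2 by simp
qed

lemma xi_ee_no_grandchildren_ge:
  "N2 = {} \<Longrightarrow> N1 \<noteq> {} \<Longrightarrow> 3 / 2 * real (card N1) \<le> xi_ee G"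
  using xi_ee_no_grandchildren by (simp add: mult_left_mono)

lemma xi_ee_sole_parent:
  assumes x: "x \<in> N1" and sole: "\<forall>v\<in>N2. p v = x" and y: "y \<in> N1" "y \<noteq> x" and "N2 \<noteq> {}"
  shows "xi_ee G = (5 * real (card (verts G)) - 4) / 6"
proof -
  obtain v where v: "v \<in> N2" using \<open>N2 \<noteq> {}\<close> by blast
  have ecc_c: "ecc G c = 2" using ecc_root x \<open>N2 \<noteq> {}\<close> by auto
  have ecc_x: "ecc G x = 2" using ecc_sole_parent_eq_2[OF x sole y] .
  have "ecc G z = 3" if "z \<in> N1 - {x}" for z
    using ecc_child_eq_3[of z v] that v sole by auto
  then have "(\<Sum>z\<in>N1 - {x}. 1 / real (ecc G c) + 1 / real (ecc G z)) = (\<Sum>z\<in>N1 - {x}. 5 / 6)"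
    using ecc_c by (intro sum.cong) auto
  moreover have "0 < card N1" using x finite_N1 card_gt_0_iff by blast
  ultimately have children:
    "(\<Sum>z\<in>N1. 1 / real (ecc G c) + 1 / real (ecc G z)) = 1 + 5 / 6 * (real (card N1) - 1)"
    using sum.remove[OF finite_N1 x, of "\<lambda>z. 1 / real (ecc G c) + 1 / real (ecc G z)"] finite_N1 ecc_c ecc_x x
    by simp
  have "(\<Sum>w\<in>N2. 1 / real (ecc G (p w)) + 1 / real (ecc G w)) = (\<Sum>w\<in>N2. 5 / 6)"
    using ecc_grandchild_eq_3[OF sole y] sole ecc_x by (intro sum.cong) auto
  then show ?thesis using xi_ee_eq children card_verts by (simp add: field_simps)
qed

lemma xi_ee_several_parents:
  assumes v: "v \<in> N2" "w \<in> N2" "p v \<noteq> p w"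
  shows "xi_ee G = 5 / 6 * real (card N1) + 7 / 12 * real (card N2)"
proof -
  have "N1 \<noteq> {}" using parent_in[OF v(1)] by blast
  then have ecc_c: "ecc G c = 2" using ecc_root v(1) by auto
  have ecc_x: "ecc G x = 3" if "x \<in> N1" for x
    using ecc_child_eq_3[OF that v(1)] ecc_child_eq_3[OF that v(2)] v(3) by metis
  have ecc_v: "ecc G u = 4" if "u \<in> N2" for u
    using ecc_grandchild_eq_4[OF that v(1)] ecc_grandchild_eq_4[OF that v(2)] v(3) by metis
  have "(\<Sum>x\<in>N1. 1 / real (ecc G c) + 1 / real (ecc G x)) = (\<Sum>x\<in>N1. 5 / 6)"
    using ecc_c ecc_x by (intro sum.cong) auto
  moreover have "(\<Sum>u\<in>N2. 1 / real (ecc G (p u)) + 1 / real (ecc G u)) = (\<Sum>u\<in>N2. 7 / 12)"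
    using ecc_x ecc_v parent_in by (intro sum.cong) auto
  ultimately show ?thesis using xi_ee_eq by simp
qed

lemma matching_number_le_parents: "matching_number G \<le> card (p ` N2) + 1"
proof -
  have "matching_number G \<le> card (insert c (p ` N2))"
    using finite_N2 by (intro matching_number_le_cover[OF simple]) (auto simp: edges_eq)
  also have "\<dots> \<le> card (p ` N2) + 1" using finite_N2 by (simp add: card_insert_if)
  finally show ?thesis .
qed

lemma two_le_matching_number_child_grandchild:
  assumes "y \<in> N1" "v \<in> N2" "p v \<noteq> y"
  shows "2 \<le> matching_number G"
proof (rule two_le_matching_number[OF simple])
  show "{c, y} \<in> edges G" "{p v, v} \<in> edges G" using assms edge_iff by auto
  show "{c, y} \<inter> {p v, v} = {}" using assms root_notin parent_in[of v] levels_disjoint by auto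
qed simp


lemma matching_number_several_parents:
  assumes "v \<in> N2" "w \<in> N2" "p v \<noteq> p w"
  shows "2 \<le> matching_number G" and "matching_number G \<le> card N2 + 1"
    and "matching_number G = card N2 + 1 \<Longrightarrow> inj_on p N2"
proof -
  show "2 \<le> matching_number G"
    using two_le_matching_number_child_grandchild[of "p w" v] assms parent_in by auto
  have "card (p ` N2) \<le> card N2" using card_image_le[OF finite_N2] .
  then show "matching_number G \<le> card N2 + 1" using matching_number_le_parents by linarith
  show "inj_on p N2" if "matching_number G = card N2 + 1"
    using that matching_number_le_parents \<open>card (p ` N2) \<le> card N2\<close>
    by (intro eq_card_imp_inj_on[OF finite_N2]) linarith
qed

lemma matching_number_sole_parent:
  assumes "x \<in> N1" "\<forall>v\<in>N2. p v = x" "y \<in> N1" "y \<noteq> x" "N2 \<noteq> {}"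
  shows "matching_number G = 2"
proof -
  obtain v where v: "v \<in> N2" using assms(5) by blast
  have "p ` N2 \<subseteq> {x}" using assms(2) by auto
  then have "card (p ` N2) \<le> 1" using card_mono[of "{x}"] by fastforce
  then show ?thesis
    using matching_number_le_parents two_le_matching_number_child_grandchild[OF assms(3) v] assms(2,4) v
    by fastforce
qed

end

lemma bij_betw_extendE:
  assumes g: "bij_betw g A C" and "A \<subseteq> N" "finite N" "finite D" "card (N - A) = card D" "C \<inter> D = {}"
  obtains f where "bij_betw f N (C \<union> D)" "\<And>x. x \<in> A \<Longrightarrow> f x = g x"
proof -
  obtain h where h: "bij_betw h (N - A) D"
    using finite_same_card_bij[of "N - A" D] assms(3-5) by blast
  have "bij_betw (\<lambda>x. if x \<in> A then g x else h x) (A \<union> (N - A)) (C \<union> D)"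
    using assms(6) by (intro bij_betw_disjoint_Un[OF g h]) auto
  moreover have "A \<union> (N - A) = N" using \<open>A \<subseteq> N\<close> by blast
  ultimately show ?thesis using that[of "\<lambda>x. if x \<in> A then g x else h x"] by simp
qed

lemma bij_betw_insert_disjoint_Un:
  assumes "bij_betw f1 A A'" "bij_betw f2 B B'" "A \<inter> B = {}" "A' \<inter> B' = {}"
    and "c \<notin> A \<union> B" "c' \<notin> A' \<union> B'"
  shows "bij_betw (\<lambda>x. if x = c then c' else if x \<in> A then f1 x else f2 x) (insert c (A \<union> B)) (insert c' (A' \<union> B'))"
proof -
  let ?f = "\<lambda>x. if x = c then c' else if x \<in> A then f1 x else f2 x"
  have "bij_betw ?f (A \<union> B) (A' \<union> B')"
    using bij_betw_disjoint_Un[OF assms(1-4)] by (rule bij_betw_cong[THEN iffD1, rotated]) (use assms(5) in auto)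
  then have "bij_betw ?f (A \<union> B \<union> {c}) (A' \<union> B' \<union> {?f c})"
    using assms(5,6) by (intro notIn_Un_bij_betw) auto
  then show ?thesis by simp
qed

lemma depth_two_tree_iso:
  assumes G: "depth_two_tree G c N1 N2 p" and H: "depth_two_tree H c' N1' N2' p'"
    and f1: "bij_betw f1 N1 N1'" and f2: "bij_betw f2 N2 N2'"
    and parent: "\<And>v. v \<in> N2 \<Longrightarrow> p' (f2 v) = f1 (p v)"
  shows "graph_iso G H"
proof -
  interpret G: depth_two_tree G c N1 N2 p by (rule G)
  interpret H: depth_two_tree H c' N1' N2' p' by (rule H)
  define f where "f x = (if x = c then c' else if x \<in> N1 then f1 x else f2 x)" for x
  have f_N1: "f x = f1 x" if "x \<in> N1" for x using that G.root_notin unfolding f_def by auto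
  have f_N2: "f x = f2 x" if "x \<in> N2" for x using that G.root_notin G.levels_disjoint unfolding f_def by auto
  have bij: "bij_betw f (verts G) (verts H)"
    unfolding f_def G.verts_eq H.verts_eq using G.root_notin H.root_notin
    by (intro bij_betw_insert_disjoint_Un f1 f2 G.levels_disjoint H.levels_disjoint) auto
  have level_f: "(f u = c' \<longleftrightarrow> u = c) \<and> (f u \<in> N1' \<longleftrightarrow> u \<in> N1) \<and> (f u \<in> N2' \<longleftrightarrow> u \<in> N2)"
    if "u \<in> verts G" for u
  proof -
    have "u = c \<or> u \<in> N1 \<or> u \<in> N2" using that G.verts_eq by simp
    moreover have "f c = c'" by (simp add: f_def)
    moreover have "f u \<in> N1'" if "u \<in> N1" using that f_N1 bij_betwE[OF f1] by simp
    moreover have "f u \<in> N2'" if "u \<in> N2" using that f_N2 bij_betwE[OF f2] by simp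
    ultimately show ?thesis
      using G.root_notin H.root_notin G.levels_disjoint H.levels_disjoint by (elim disjE) auto
  qed
  have parent_f: "f u = p' (f v) \<longleftrightarrow> u = p v" if "u \<in> verts G" "v \<in> N2" for u v
  proof -
    have pv: "p v \<in> N1" using G.parent_in that(2) .
    have "f u = f1 (p v) \<longleftrightarrow> u = p v"
      using level_f[OF that(1)] f_N1 pv bij_betwE[OF f1] bij_betw_imp_inj_on[OF f1]
      by (metis inj_on_eq_iff)
    then show ?thesis using parent that(2) f_N2 by simp
  qed
  have child_f: "(f v \<in> N2' \<and> f u = p' (f v)) \<longleftrightarrow> (v \<in> N2 \<and> u = p v)"
    if "u \<in> verts G" "v \<in> verts G" for u v
    using level_f[OF that(2)] parent_f[OF that(1)] by (cases "v \<in> N2") simp_all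
  have adj_f: "adj H (f u) (f v) \<longleftrightarrow> adj G u v" if "u \<in> verts G" "v \<in> verts G" for u v
    unfolding H.adj_iff G.adj_iff
    using level_f[OF that(1)] level_f[OF that(2)] child_f[OF that] child_f[OF that(2,1)] by simp
  show ?thesis
    unfolding graph_iso_def G.edge_iff_adj H.edge_iff_adj
    using bij adj_f[symmetric] by blast
qed

section \<open>Stars, double stars and the trees \<open>T\<^sub>n\<^sub>,\<^sub>\<beta>\<close>\<close>

lemma star_graph_depth_two_tree: "1 \<le> n \<Longrightarrow> depth_two_tree (star_graph n) 0 {1..<n} {} id"
  by unfold_locales (auto simp: star_graph_def verts_def edges_def)

lemma pairs_shift_eq_image: "{{u, k + j} |j. j < (m::nat)} = (\<lambda>x. {u, x}) ` {k..<k + m}"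
proof (intro set_eqI iffI)
  fix e assume "e \<in> {{u, k + j} |j. j < m}"
  then obtain j where "j < m" "e = {u, k + j}" by blast
  then show "e \<in> (\<lambda>x. {u, x}) ` {k..<k + m}" by (intro image_eqI[where x = "k + j"]) auto
next
  fix e assume "e \<in> (\<lambda>x. {u, x}) ` {k..<k + m}"
  then obtain x where "x \<in> {k..<k + m}" "e = {u, x}" by blast
  then show "e \<in> {{u, k + j} |j. j < m}" by (intro CollectI exI[where x = "x - k"]) auto
qed

lemma P_graph_2_edges:
  "edges (P_graph 2 a b) = insert {0, 1} ((\<lambda>x. {0, x}) ` {2..<2 + a} \<union> (\<lambda>x. {1, x}) ` {2 + a..<2 + a + b})"
proof -
  have "{{i, i + 1} |i. i + 1 < (2::nat)} = {{0, 1}}" by auto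
  then show ?thesis
    unfolding P_graph_def edges_def snd_conv pairs_shift_eq_image[symmetric] by auto
qed

lemma P_graph_depth_two_tree:
  "depth_two_tree (P_graph 2 a b) 0 {1..<a + 2} {a + 2..<a + b + 2} (\<lambda>_. 1)"
proof unfold_locales
  have "{1..<a + 2} = insert 1 {2..<2 + a}" "{a + 2..<a + b + 2} = {2 + a..<2 + a + b}" by auto
  then show "edges (P_graph 2 a b) = (\<lambda>x. {0, x}) ` {1..<a + 2} \<union> (\<lambda>v. {1, v}) ` {a + 2..<a + b + 2}"
    unfolding P_graph_2_edges by simp
qed (auto simp: P_graph_def verts_def)

lemma P_graph_0_depth_two_tree: "depth_two_tree (P_graph 2 0 b) 1 (insert 0 {2..<b + 2}) {} id"
proof unfold_locales
  have "{2..<b + 2} = {2..<2 + b}" by auto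
  then show "edges (P_graph 2 0 b) = (\<lambda>x. {1, x}) ` insert 0 {2..<b + 2} \<union> (\<lambda>v. {id v, v}) ` {}"
    unfolding P_graph_2_edges by (simp add: insert_commute)
qed (auto simp: P_graph_def verts_def)

lemma T_graph_depth_two_tree:
  assumes "1 \<le> \<beta>" "2 * \<beta> \<le> n"
  shows "depth_two_tree (T_graph n \<beta>) 0 {1..n - \<beta>} {n - \<beta> + 1..<n} (\<lambda>v. v - (n - \<beta>))"
proof unfold_locales
  have "{{i, n - \<beta> + i} |i. 1 \<le> i \<and> i < \<beta>} = (\<lambda>v. {v - (n - \<beta>), v}) ` {n - \<beta> + 1..<n}"
  proof (intro set_eqI iffI)
    fix e assume "e \<in> {{i, n - \<beta> + i} |i. 1 \<le> i \<and> i < \<beta>}"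
    then obtain i where "1 \<le> i" "i < \<beta>" "e = {i, n - \<beta> + i}" by blast
    then show "e \<in> (\<lambda>v. {v - (n - \<beta>), v}) ` {n - \<beta> + 1..<n}"
      using assms by (intro image_eqI[where x = "n - \<beta> + i"]) auto
  next
    fix e assume "e \<in> (\<lambda>v. {v - (n - \<beta>), v}) ` {n - \<beta> + 1..<n}"
    then obtain v where "v \<in> {n - \<beta> + 1..<n}" "e = {v - (n - \<beta>), v}" by blast
    then show "e \<in> {{i, n - \<beta> + i} |i. 1 \<le> i \<and> i < \<beta>}"
      using assms by (intro CollectI exI[where x = "v - (n - \<beta>)"]) auto
  qed
  moreover have "{{0, i} |i. 1 \<le> i \<and> i \<le> n - \<beta>} = (\<lambda>x. {0, x}) ` {1..n - \<beta>}" by auto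
  ultimately show
    "edges (T_graph n \<beta>) = (\<lambda>x. {0, x}) ` {1..n - \<beta>} \<union> (\<lambda>v. {v - (n - \<beta>), v}) ` {n - \<beta> + 1..<n}"
    unfolding T_graph_def edges_def by simp
qed (use assms in \<open>auto simp: T_graph_def verts_def\<close>)

lemma xi_ee_star_graph_eq:
  assumes "2 \<le> n"
  shows "xi_ee (star_graph n) = real (n - 1) * (1 + 1 / (if 2 \<le> n - 1 then 2 else 1))"
proof -
  interpret depth_two_tree "star_graph n" 0 "{1..<n}" "{}" id
    using star_graph_depth_two_tree assms by simp
  show ?thesis using xi_ee_no_grandchildren assms by simp
qed

lemma xi_ee_star_graph:
  assumes "3 \<le> n"
  shows "xi_ee (star_graph n) = (3 * real n - 3) / 2"
proof -
  have "2 \<le> n - 1" using assms by linarith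
  then show ?thesis using xi_ee_star_graph_eq[of n] assms by (simp add: of_nat_diff field_simps)
qed

lemma xi_ee_P_graph_ge: "(5 * real (a + b + 2) - 4) / 6 \<le> xi_ee (P_graph 2 a b)"
proof -
  interpret P: depth_two_tree "P_graph 2 a b" 0 "{1..<a + 2}" "{a + 2..<a + b + 2}" "\<lambda>_. 1"
    by (rule P_graph_depth_two_tree)
  consider "1 \<le> a" "1 \<le> b" | "b = 0" | "a = 0" "1 \<le> b" by linarith
  then show ?thesis
  proof cases
    case 1
    then have "xi_ee (P_graph 2 a b) = (5 * real (card (verts (P_graph 2 a b))) - 4) / 6"
      by (intro P.xi_ee_sole_parent[of 1 2]) auto
    then show ?thesis using P.card_verts by simp
  next
    case 2
    then show ?thesis using P.xi_ee_no_grandchildren_ge by simp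
  next
    case 3
    interpret P0: depth_two_tree "P_graph 2 0 b" 1 "insert 0 {2..<b + 2}" "{}" id
      by (rule P_graph_0_depth_two_tree)
    show ?thesis using P0.xi_ee_no_grandchildren_ge 3 by simp
  qed
qed

lemma xi_ee_T_graph:
  assumes "3 \<le> \<beta>" "2 * \<beta> \<le> n"
  shows "xi_ee (T_graph n \<beta>) = (10 * real n - 3 * real \<beta> - 7) / 12"
proof -
  interpret depth_two_tree "T_graph n \<beta>" 0 "{1..n - \<beta>}" "{n - \<beta> + 1..<n}" "\<lambda>v. v - (n - \<beta>)"
    using T_graph_depth_two_tree assms by simp
  have "xi_ee (T_graph n \<beta>) = 5 / 6 * real (n - \<beta>) + 7 / 12 * real (\<beta> - 1)"
    using xi_ee_several_parents[of "n - \<beta> + 1" "n - \<beta> + 2"] assms by simp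
  then show ?thesis using assms by (simp add: field_simps)
qed

context depth_two_tree
begin

lemma xi_ee_no_grandchildren_eq_star:
  assumes "N2 = {}" "N1 \<noteq> {}"
  shows "xi_ee G = xi_ee (star_graph (card (verts G)))"
proof -
  have "1 \<le> card N1" using assms(2) finite_N1 by (simp add: Suc_leI card_gt_0_iff)
  then show ?thesis
    using xi_ee_no_grandchildren[OF assms] xi_ee_star_graph_eq[of "card (verts G)"] card_verts assms(1)
    by simp
qed

lemma iso_P_graph:
  assumes x: "x \<in> N1" and sole: "\<forall>v\<in>N2. p v = x"
  shows "graph_iso G (P_graph 2 (card N1 - 1) (card N2))"
proof -
  define a where "a = card N1 - 1"
  define b where "b = card N2"
  have "card (N1 - {x}) = card {2..<a + 2}" using x finite_N1 unfolding a_def by simp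
  then obtain f1 where f1: "bij_betw f1 N1 ({1} \<union> {2..<a + 2})" "f1 x = 1"
    using bij_betw_extendE[of "\<lambda>_. 1" "{x}" "{1}" N1 "{2..<a + 2}"] x finite_N1
    by (auto simp: bij_betw_def)
  have "{1} \<union> {2..<a + 2} = {1..<a + 2}" by auto
  then have f1': "bij_betw f1 N1 {1..<a + 2}" using f1(1) by simp
  have "card N2 = card {a + 2..<a + b + 2}" unfolding b_def by simp
  then obtain f2 where f2: "bij_betw f2 N2 {a + 2..<a + b + 2}"
    using finite_same_card_bij finite_N2 by blast
  have "graph_iso G (P_graph 2 a b)"
    using depth_two_tree_iso[OF depth_two_tree_axioms P_graph_depth_two_tree f1' f2] f1(2) sole by simp
  then show ?thesis unfolding a_def b_def .
qed

text \<open>When \<open>p\<close> is injective, the children with a child are matched with the pendant paths of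
  \<open>T_{n,\<beta>}\<close> and the remaining children with its leaves at the centre.\<close>

lemma iso_T_graph:
  assumes inj: "inj_on p N2" and size: "2 * (card N2 + 1) \<le> card (verts G)"
  shows "graph_iso G (T_graph (card (verts G)) (card N2 + 1))"
proof -
  define n where "n = card (verts G)"
  define \<beta> where "\<beta> = card N2 + 1"
  define k where "k = n - \<beta>"
  have n: "n = 1 + card N1 + card N2" using card_verts unfolding n_def .
  have k: "n = k + \<beta>" "\<beta> \<le> k" using size unfolding n_def \<beta>_def k_def by auto
  have "card N2 = card {k + 1..<n}" using k unfolding \<beta>_def by simp
  then obtain f2 where f2: "bij_betw f2 N2 {k + 1..<n}"
    using finite_same_card_bij[OF finite_N2] by blast
  have inv: "bij_betw (inv_into N2 p) (p ` N2) N2"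
    by (rule bij_betw_inv_into[OF inj_on_imp_bij_betw[OF inj]])
  have shift: "bij_betw (\<lambda>v. v - k) {k + 1..<n} {1..<\<beta>}"
    unfolding bij_betw_def using k by (auto simp: inj_on_def image_minus_const_atLeastLessThan_nat)
  have sub: "p ` N2 \<subseteq> N1" using parent_in by auto
  have card: "card (N1 - p ` N2) = card {\<beta>..k}"
    using card_Diff_subset[OF finite_imageI[OF finite_N2] sub] card_image[OF inj] n k
    unfolding \<beta>_def by simp
  obtain f1 where f1: "bij_betw f1 N1 ({1..<\<beta>} \<union> {\<beta>..k})"
    and f1_parent: "\<And>x. x \<in> p ` N2 \<Longrightarrow> f1 x = ((\<lambda>v. v - k) \<circ> f2 \<circ> inv_into N2 p) x"
    by (rule bij_betw_extendE[OF bij_betw_trans[OF bij_betw_trans[OF inv f2] shift] sub finite_N1 _ card])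
      auto
  moreover have "{1..<\<beta>} \<union> {\<beta>..k} = {1..n - \<beta>}" using k unfolding \<beta>_def k_def by auto
  ultimately have f1: "bij_betw f1 N1 {1..n - \<beta>}" by simp
  have "graph_iso G (T_graph n \<beta>)"
  proof (rule depth_two_tree_iso[OF depth_two_tree_axioms T_graph_depth_two_tree f1 f2[unfolded k_def]])
    show "1 \<le> \<beta>" "2 * \<beta> \<le> n" using size unfolding \<beta>_def n_def by auto
    show "f2 v - (n - \<beta>) = f1 (p v)" if "v \<in> N2" for v
      using that f1_parent[of "p v"] inv_into_f_f[OF inj that] unfolding k_def by simp
  qed
  then show ?thesis unfolding n_def \<beta>_def .
qed

lemma shapes:
  obtains (edgeless) "matching_number G = 0"
  | (star) "matching_number G \<le> 1" "xi_ee G = xi_ee (star_graph (card (verts G)))"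
  | (double_star) a b where "a + b + 2 = card (verts G)" "graph_iso G (P_graph 2 a b)"
      "matching_number G = 2" "xi_ee G = (5 * real (card (verts G)) - 4) / 6"
  | (spread) k m where "card (verts G) = 1 + k + m" "xi_ee G = 5 / 6 * real k + 7 / 12 * real m"
      "2 \<le> matching_number G" "matching_number G \<le> m + 1"
      "matching_number G = m + 1 \<Longrightarrow> 2 * (m + 1) \<le> card (verts G) \<Longrightarrow>
        graph_iso G (T_graph (card (verts G)) (m + 1))"
  | (off_centre) x where "x \<in> verts G" "ecc G x < ecc G c"
proof -
  consider "N1 = {}" | "N1 \<noteq> {}" "N2 = {}" | v w where "v \<in> N2" "w \<in> N2" "p v \<noteq> p w"
    | x where "x \<in> N1" "N2 \<noteq> {}" "\<forall>v\<in>N2. p v = x"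
    using parent_in by blast
  then show ?thesis
  proof cases
    case 1
    then have "matching_number G \<le> card ({} :: 'a set)"
      using parent_in by (intro matching_number_le_cover[OF simple]) (auto simp: edges_eq)
    then show ?thesis using edgeless by simp
  next
    case 2
    then show ?thesis using star matching_number_le_parents xi_ee_no_grandchildren_eq_star by simp
  next
    case 3
    then show ?thesis
      using spread[OF card_verts xi_ee_several_parents[OF 3]] matching_number_several_parents[OF 3]
        iso_T_graph by blast
  next
    case (4 x)
    show ?thesis
    proof (cases "N1 = {x}")
      case True
      then show ?thesis using off_centre[of x] ecc_sole_child_eq_1 ecc_root 4 verts_eq by auto
    next
      case False
      then obtain y where y: "y \<in> N1" "y \<noteq> x" using 4 by blast
      have "0 < card N1" using 4(1) finite_N1 card_gt_0_iff by blast
      then have "card N1 - 1 + card N2 + 2 = card (verts G)" using card_verts by simp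
      then show ?thesis
        using double_star iso_P_graph[OF 4(1,3)] matching_number_sole_parent[OF 4(1,3) y 4(2)]
          xi_ee_sole_parent[OF 4(1,3) y 4(2)] by blast
    qed
  qed
qed

end

section \<open>The shape of a tree around its centre\<close>

text \<open>The first four vertices of a shortest path from the centre to a farthest vertex span two
  disjoint edges.\<close>

lemma two_le_matching_number_if_ecc_ge_3:
  assumes t: "tree T" and c: "c \<in> verts T" and "3 \<le> ecc T c"
  shows "2 \<le> matching_number T"
proof -
  have s: "simple_graph T" using tree_simple[OF t] .
  have "finite (verts T)" using s unfolding simple_graph_def by simp
  then obtain w where w: "w \<in> verts T" "dist T c w = ecc T c" using c by (auto elim: ecc_attained)
  obtain xs where xs: "walk T xs" "hd xs = c" "last xs = w" "length xs = Suc (dist T c w)"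
    using shortest_walk[OF tree_reachable[OF t c w(1)]] .
  have len: "4 \<le> length xs" using xs(4) w(2) \<open>3 \<le> ecc T c\<close> by simp
  have dist_nth: "dist T c (xs ! i) = i" if "i < 4" for i
    using dist_shortest_walk_nth[OF xs(1,2)] xs(3,4) len that by simp
  have "adj T (xs ! 0) (xs ! 1)" "adj T (xs ! 2) (xs ! 3)"
    using xs(1) len unfolding walk_def by (auto simp: numeral_3_eq_3 numeral_2_eq_2)
  then have "{xs ! 0, xs ! 1} \<in> edges T" "{xs ! 2, xs ! 3} \<in> edges T" unfolding adj_def by auto
  moreover have "{xs ! 0, xs ! 1} \<inter> {xs ! 2, xs ! 3} = {}"
    using dist_nth[of 0] dist_nth[of 1] dist_nth[of 2] dist_nth[of 3] by auto
  ultimately show ?thesis using two_le_matching_number[OF s] by blast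
qed

lemma xi_ee_le_if_ecc_ge_3:
  assumes s: "simple_graph G" and ecc: "\<And>x. x \<in> verts G \<Longrightarrow> 3 \<le> ecc G x"
  shows "xi_ee G \<le> 2 / 3 * real (card (edges G))"
proof -
  have "(\<Sum>x\<in>e. 1 / real (ecc G x)) \<le> 2 / 3" if e: "e \<in> edges G" for e
  proof -
    obtain u v where uv: "e = {u, v}" "u \<noteq> v" "u \<in> verts G" "v \<in> verts G"
      using simple_graph_edgeE[OF s e] by blast
    have "1 / real (ecc G u) \<le> 1 / 3" "1 / real (ecc G v) \<le> 1 / 3"
      using ecc[OF uv(3)] ecc[OF uv(4)] by (simp_all add: divide_le_eq)
    then show ?thesis using uv by simp
  qed
  then have "xi_ee G \<le> (\<Sum>e\<in>edges G. 2 / 3)" unfolding xi_ee_def by (rule sum_mono)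
  then show ?thesis by simp
qed

lemma tree_adj_adj_not_adj:
  assumes t: "tree T" and "adj T c x" "adj T c y"
  shows "\<not> adj T x y"
proof
  assume "adj T x y"
  with assms show False
    using tree_no_cycle[OF t, of "[c, x, y]"] adj_in_verts[OF tree_simple[OF t]]
    by (auto simp: adj_def insert_commute)
qed

lemma tree_common_neighbour_unique:
  assumes t: "tree T" and "adj T c x" "adj T x v" "adj T c y" "adj T y v" "c \<noteq> v"
  shows "x = y"
proof (rule ccontr)
  assume "x \<noteq> y"
  with assms show False
    using tree_no_cycle[OF t, of "[c, x, v, y]"] adj_in_verts[OF tree_simple[OF t]]
    by (auto simp: adj_def insert_commute)
qed

lemma tree_distance_two_not_adj:
  assumes t: "tree T" and x: "adj T c x" "adj T x v" and y: "adj T c y" "adj T y w"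
    and "v \<noteq> c" "w \<noteq> c" and far: "\<not> adj T c v" "\<not> adj T c w"
  shows "\<not> adj T v w"
proof
  assume vw: "adj T v w"
  show False
  proof (cases "x = y")
    case True
    then show False using tree_adj_adj_not_adj[OF t, of x v w] x y vw by (simp add: adj_commute)
  next
    case False
    have "x \<noteq> w" "y \<noteq> v" using x(1) y(1) far by auto
    with False assms vw show False
      using tree_no_cycle[OF t, of "[c, x, v, w, y]"] adj_in_verts[OF tree_simple[OF t]]
      by (auto simp: adj_def insert_commute)
  qed
qed

text \<open>Around a vertex of eccentricity at most two a tree is a tree of height at most two: each
  further edge would close a cycle of length three, four or five through the root.\<close>

lemma tree_depth_two_treeE:
  assumes t: "tree T" and c: "c \<in> verts T" and ecc: "ecc T c \<le> 2"
  obtains N1 N2 p where "depth_two_tree T c N1 N2 p"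
proof -
  have s: "simple_graph T" using tree_simple[OF t] .
  have finV: "finite (verts T)" using s unfolding simple_graph_def by simp
  define N1 where "N1 = {x \<in> verts T. adj T c x}"
  define N2 where "N2 = verts T - insert c N1"
  have "\<exists>x. x \<in> N1 \<and> adj T x v" if v: "v \<in> N2" for v
  proof -
    have reach: "reachable T c v" using tree_reachable[OF t c] v N2_def by blast
    have "dist T c v \<le> 2" using dist_le_ecc[OF finV, of v c] ecc v N2_def by simp
    moreover have "dist T c v \<noteq> 0" using dist_eq_0D[OF reach] v N2_def by auto
    moreover have "dist T c v \<noteq> 1" using dist_eq_1D[OF reach] v N2_def N1_def by auto
    ultimately obtain x where "adj T c x" "adj T x v" using dist_eq_2D[OF reach] by force
    then show ?thesis unfolding N1_def using adj_in_verts[OF s] by blast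
  qed
  then obtain p where p: "\<And>v. v \<in> N2 \<Longrightarrow> p v \<in> N1 \<and> adj T (p v) v" by metis
  have c_notin: "c \<notin> N1" "c \<notin> N2" unfolding N1_def N2_def adj_def by auto
  have N12: "N1 \<inter> N2 = {}" unfolding N2_def by auto
  have "edges T \<subseteq> (\<lambda>x. {c, x}) ` N1 \<union> (\<lambda>v. {p v, v}) ` N2"
  proof
    fix e assume e: "e \<in> edges T"
    then obtain a b where ab: "e = {a, b}" "adj T a b"
      using simple_graph_edgeE[OF s e] unfolding adj_def by metis
    have "a \<in> verts T" "b \<in> verts T" using adj_in_verts[OF s ab(2)] by auto
    then consider "a = c" "b \<in> N1" | "b = c" "a \<in> N1" | "a \<in> N1" "b \<in> N2" | "a \<in> N2" "b \<in> N1"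
      using ab(2) adj_commute[of T a b] tree_adj_adj_not_adj[OF t, of c a b]
        tree_distance_two_not_adj[OF t, of c "p a" a "p b" b] p[of a] p[of b]
      unfolding N2_def N1_def adj_def by auto
    then show "e \<in> (\<lambda>x. {c, x}) ` N1 \<union> (\<lambda>v. {p v, v}) ` N2"
    proof cases
      case 3
      then have "a = p b"
        using tree_common_neighbour_unique[OF t, of c a b "p b"] ab(2) p[of b] c_notin unfolding N1_def by auto
      then show ?thesis using 3 ab(1) by blast
    next
      case 4
      then have "b = p a"
        using tree_common_neighbour_unique[OF t, of c b a "p a"] ab(2) adj_commute[of T a b] p[of a] c_notin
        unfolding N1_def by auto
      then show ?thesis using 4 ab(1) by (auto simp: insert_commute)
    qed (use ab(1) in \<open>auto simp: insert_commute\<close>)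
  qed
  moreover have "(\<lambda>x. {c, x}) ` N1 \<union> (\<lambda>v. {p v, v}) ` N2 \<subseteq> edges T"
    using p unfolding N1_def adj_def by auto
  moreover have "verts T = insert c (N1 \<union> N2)" using c unfolding N1_def N2_def by auto
  ultimately have "depth_two_tree T c N1 N2 p"
    using finV c_notin N12 p by unfold_locales auto
  then show ?thesis by (rule that)
qed

lemma tree_shapes:
  assumes t: "tree T"
  obtains (edgeless) "matching_number T = 0"
  | (star) "matching_number T \<le> 1" "xi_ee T = xi_ee (star_graph (card (verts T)))"
  | (double_star) a b where "a + b + 2 = card (verts T)" "graph_iso T (P_graph 2 a b)"
      "matching_number T = 2" "xi_ee T = (5 * real (card (verts T)) - 4) / 6"
  | (spread) k m where "card (verts T) = 1 + k + m" "xi_ee T = 5 / 6 * real k + 7 / 12 * real m"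
      "2 \<le> matching_number T" "matching_number T \<le> m + 1"
      "matching_number T = m + 1 \<Longrightarrow> 2 * (m + 1) \<le> card (verts T) \<Longrightarrow>
        graph_iso T (T_graph (card (verts T)) (m + 1))"
  | (large_radius) "2 \<le> matching_number T" "xi_ee T \<le> 2 / 3 * (real (card (verts T)) - 1)"
proof -
  have s: "simple_graph T" using tree_simple[OF t] .
  obtain c0 where "c0 \<in> verts T" using t unfolding tree_def connected_graph_def by blast
  then obtain c where c: "c \<in> verts T" and centre: "\<And>x. x \<in> verts T \<Longrightarrow> ecc T c \<le> ecc T x"
    using ex_has_least_nat[of "\<lambda>x. x \<in> verts T" c0 "ecc T"] by blast
  show ?thesis
  proof (cases "3 \<le> ecc T c")
    case True
    then have "xi_ee T \<le> 2 / 3 * real (card (edges T))"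
      using centre by (intro xi_ee_le_if_ecc_ge_3[OF s]) (auto intro: order_trans)
    moreover have "real (card (edges T)) \<le> real (card (verts T)) - 1" using tree_card_edges[OF t] by linarith
    ultimately show ?thesis using large_radius two_le_matching_number_if_ecc_ge_3[OF t c True] by simp
  next
    case False
    then obtain N1 N2 p where "depth_two_tree T c N1 N2 p" using tree_depth_two_treeE[OF t c] by auto
    then interpret depth_two_tree T c N1 N2 p .
    show ?thesis
    proof (cases rule: shapes)
      case (off_centre x)
      then show ?thesis using centre by fastforce
    qed (use that in blast)+
  qed
qed

lemma xi_ee_tree_matching_number_1:
  assumes "tree T" "matching_number T = 1"
  shows "xi_ee T = xi_ee (star_graph (card (verts T)))"
  using assms(1) by (cases rule: tree_shapes) (use assms(2) in auto)

lemma xi_ee_tree_matching_number_2: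
  assumes t: "tree T" and \<beta>: "matching_number T = 2"
  shows "xi_ee T \<le> (5 * real (card (verts T)) - 4) / 6"
    and "xi_ee T = (5 * real (card (verts T)) - 4) / 6 \<longleftrightarrow>
      (\<exists>a b. a + b + 2 = card (verts T) \<and> graph_iso T (P_graph 2 a b))"
proof -
  have "xi_ee T < (5 * real (card (verts T)) - 4) / 6 \<or>
    xi_ee T = (5 * real (card (verts T)) - 4) / 6 \<and>
      (\<exists>a b. a + b + 2 = card (verts T) \<and> graph_iso T (P_graph 2 a b))"
    using t
  proof (cases rule: tree_shapes)
    case large_radius
    then show ?thesis using card_verts_tree_pos[OF t] by simp
  qed (use \<beta> in auto)
  moreover have "(5 * real (card (verts T)) - 4) / 6 \<le> xi_ee T"
    if "a + b + 2 = card (verts T)" "graph_iso T (P_graph 2 a b)" for a b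
    using graph_iso_xi_ee[OF tree_simple[OF t] depth_two_tree.simple[OF P_graph_depth_two_tree] that(2)]
      xi_ee_P_graph_ge[of a b] that(1) by simp
  ultimately show "xi_ee T \<le> (5 * real (card (verts T)) - 4) / 6"
    and "xi_ee T = (5 * real (card (verts T)) - 4) / 6 \<longleftrightarrow>
      (\<exists>a b. a + b + 2 = card (verts T) \<and> graph_iso T (P_graph 2 a b))"
    by force+
qed

lemma xi_ee_tree_matching_number_ge_3:
  assumes t: "tree T" and \<beta>: "3 \<le> matching_number T" "2 * matching_number T \<le> card (verts T)"
  shows "xi_ee T \<le> (10 * real (card (verts T)) - 3 * real (matching_number T) - 7) / 12"
    and "xi_ee T = (10 * real (card (verts T)) - 3 * real (matching_number T) - 7) / 12 \<longleftrightarrow>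
      graph_iso T (T_graph (card (verts T)) (matching_number T))"
proof -
  have "xi_ee T < (10 * real (card (verts T)) - 3 * real (matching_number T) - 7) / 12 \<or>
    graph_iso T (T_graph (card (verts T)) (matching_number T))"
    using t
  proof (cases rule: tree_shapes)
    case (spread k m)
    then show ?thesis using \<beta> by (cases "matching_number T = m + 1") auto
  qed (use \<beta> in auto)
  moreover have "xi_ee T = (10 * real (card (verts T)) - 3 * real (matching_number T) - 7) / 12"
    if "graph_iso T (T_graph (card (verts T)) (matching_number T))"
    using graph_iso_xi_ee[OF tree_simple[OF t] depth_two_tree.simple[OF T_graph_depth_two_tree] that]
      xi_ee_T_graph \<beta> by simp
  ultimately show "xi_ee T \<le> (10 * real (card (verts T)) - 3 * real (matching_number T) - 7) / 12"
    and "xi_ee T = (10 * real (card (verts T)) - 3 * real (matching_number T) - 7) / 12 \<longleftrightarrow>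
      graph_iso T (T_graph (card (verts T)) (matching_number T))"
    by force+
qed

theorem theorem4p2:
  fixes T :: "'a graph" and n \<beta> :: nat
  assumes "tree T" and "card (verts T) = n" and "matching_number T = \<beta>" and "n \<ge> 2 * \<beta>"
  shows "(\<beta> = 1 \<longrightarrow> xi_ee T = xi_ee (star_graph n) \<and>
            (n \<ge> 3 \<longrightarrow> xi_ee (star_graph n) = (3 * real n - 3) / 2))
       \<and> (\<beta> = 2 \<longrightarrow> xi_ee T \<le> (5 * real n - 4) / 6 \<and>
            (xi_ee T = (5 * real n - 4) / 6 \<longleftrightarrow>
               (\<exists>a b. a + b + 2 = n \<and> graph_iso T (P_graph 2 a b))))
       \<and> (\<beta> \<ge> 3 \<longrightarrow> xi_ee T \<le> (10 * real n - 3 * real \<beta> - 7) / 12 \<and>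
            (xi_ee T = (10 * real n - 3 * real \<beta> - 7) / 12 \<longleftrightarrow> graph_iso T (T_graph n \<beta>)))"
  using xi_ee_tree_matching_number_1[OF assms(1)] xi_ee_star_graph[of n]
    xi_ee_tree_matching_number_2[OF assms(1)] xi_ee_tree_matching_number_ge_3[OF assms(1)]
  unfolding assms(2,3) using assms(4) by simp

end
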